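(* Let $\Delta:M_n\to M_n$ be a weak-2-local derivation, let $p_1,\ldots,p_n$ be mutually orthogonal minimal projections in $M_n$, and let $q=1-p_n$. Let $R\subseteq\{1,\ldots,n-1\}$ and set $r=\sum_{i\in R}p_i$ if $R\neq\emptyset$ and $r=0$ if $R=\emptyset$. Assume $\Delta(qaq+rap_n)=0$ for every $a\in M_n$. Then $\Delta(qaq+rap_n+\lambda e_{kn})=p_k\Delta(qaq+rap_n+\lambda e_{kn})p_n$ for every $a\in M_n$, $\lambda\in\mathbb{C}$ and $1\le k\le n-1$.
   Context: $M_n=M_n(\mathbb{C})$. For $i,j$, $e_{ij}$ is the unique minimal partial isometry in $M_n$ with $e_{ij}^*e_{ij}=p_j$ and $e_{ij}e_{ij}^*=p_i$. A derivation on $M_n$ is a linear map $D$ with $D(ab)=D(a)b+aD(b)$. A (not necessarily linear) map $\Delta:M_n\to M_n$ is a weak-2-local derivation if for every $a,b\in M_n$ and every $\phi\in M_n^*$ there exists a derivation $D_{a,b,\phi}$ such that $\phi\Delta(a)=\phi D_{a,b,\phi}(a)$ and $\phi\Delta(b)=\phi D_{a,b,\phi}(b)$. *)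

theory Defs
  imports "HOL-Analysis.Analysis"
begin

text \<open>M_n(C) is modelled as complex^'n^'n with CARD('n) = n; the projections
p_1,...,p_n are indexed by the finite type 'n.\<close>

definition cscale :: "complex \<Rightarrow> complex^'n^'n \<Rightarrow> complex^'n^'n" where
  "cscale c A = (\<chi> i j. c * A $ i $ j)"

definition adj :: "complex^'n^'n \<Rightarrow> complex^'n^'n" where
  "adj A = (\<chi> i j. cnj (A $ j $ i))"

definition clinear_functional :: "(complex^'n^'n \<Rightarrow> complex) \<Rightarrow> bool" where
  "clinear_functional \<phi> \<longleftrightarrow>
     (\<forall>A B. \<phi> (A + B) = \<phi> A + \<phi> B) \<and> (\<forall>c A. \<phi> (cscale c A) = c * \<phi> A)"

definition is_derivation :: "(complex^'n^'n \<Rightarrow> complex^'n^'n) \<Rightarrow> bool" where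
  "is_derivation D \<longleftrightarrow>
     (\<forall>A B. D (A + B) = D A + D B) \<and> (\<forall>c A. D (cscale c A) = cscale c (D A)) \<and>
     (\<forall>A B. D (A ** B) = D A ** B + A ** D B)"

definition weak_2_local_derivation :: "(complex^'n^'n \<Rightarrow> complex^'n^'n) \<Rightarrow> bool" where
  "weak_2_local_derivation \<Delta> \<longleftrightarrow>
     (\<forall>a b \<phi>. clinear_functional \<phi> \<longrightarrow>
        (\<exists>D. is_derivation D \<and> \<phi> (\<Delta> a) = \<phi> (D a) \<and> \<phi> (\<Delta> b) = \<phi> (D b)))"

definition is_projection :: "complex^'n^'n \<Rightarrow> bool" where
  "is_projection p \<longleftrightarrow> adj p = p \<and> p ** p = p"

text \<open>minimal projection: nonzero projection with no subprojections other than 0 and itself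
  (for projections q, p: q \<le> p iff q p = q)\<close>
definition minimal_projection :: "complex^'n^'n \<Rightarrow> bool" where
  "minimal_projection p \<longleftrightarrow> is_projection p \<and> p \<noteq> 0 \<and>
     (\<forall>q. is_projection q \<and> q ** p = q \<longrightarrow> q = 0 \<or> q = p)"

end

theory Submission
  imports Defs
begin

text \<open>Test \<open>\<Delta>\<close> against the functionals \<open>trace (W ** _)\<close>: for each \<open>W\<close>, on a pair \<open>X, B\<close>
  with \<open>\<Delta> B = 0\<close> it agrees with some derivation \<open>D\<close> applied to \<open>X - B\<close>. For
  \<open>X = q a q + r a p\<^sub>m + c e\<close> choose \<open>B\<close> among the elements killed by \<open>\<Delta>\<close> so that \<open>X - B\<close> is
  \<open>c e\<close>, \<open>c (e + p\<^sub>k)\<close> or \<open>c e + q z q\<close>. Since \<open>C (D Y) A = 0\<close> whenever \<open>C Y = 0 = Y A\<close>, the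
  first two choices give \<open>(1 - p\<^sub>k) \<Delta>(X) q = 0\<close> and \<open>(1 - p\<^sub>k) \<Delta>(X) (p\<^sub>m - e) = 0\<close>. Since
  derivations of \<open>M\<^sub>n\<close> are traceless, \<open>trace (Y (D Y)) = 0\<close>, and the last choice gives
  \<open>q \<Delta>(X) q = 0\<close>. Together these force \<open>\<Delta>(X) = p\<^sub>k \<Delta>(X) p\<^sub>m\<close>.\<close>

lemma matrix_add_rdistrib: "((A::'a::semiring_1^'n^'m) + B) ** C = A ** C + B ** C"
  by (vector matrix_matrix_mult_def sum.distrib[symmetric] field_simps)

lemma matrix_diff_ldistrib: "(A::'a::ring_1^'n^'m) ** (B - C) = A ** B - A ** C"
  by (vector matrix_matrix_mult_def sum_subtractf[symmetric] field_simps)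

lemma matrix_diff_rdistrib: "((A::'a::ring_1^'n^'m) - B) ** C = A ** C - B ** C"
  by (vector matrix_matrix_mult_def sum_subtractf[symmetric] field_simps)

lemma mat_mult_component: "(mat c ** (A::'a::semiring_1^'n^'m)) $ i $ j = c * A $ i $ j"
  by (simp add: matrix_matrix_mult_def mat_def if_distrib if_distribR sum.delta cong: if_cong)

lemma cscale_eq_mat_mult: "cscale c A = mat c ** A"
  by (simp add: cscale_def vec_eq_iff mat_mult_component)

lemma matrix_mult_mat_left_commute:
  "(A::'a::comm_semiring_1^'n^'m) ** (mat c ** B) = mat c ** (A ** B)"
proof -
  have "(A ** (mat c ** B)) $ i $ j = c * (A ** B) $ i $ j" for i j
    by (simp add: matrix_matrix_mult_def[of A] mat_mult_component sum_distrib_left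
        mult.left_commute)
  then show ?thesis
    by (simp add: vec_eq_iff mat_mult_component)
qed

lemma trace_mat_mult: "trace (mat c ** (A::'a::semiring_1^'n^'n)) = c * trace A"
  by (simp add: trace_def mat_mult_component sum_distrib_left)

lemma trace_zero [simp]: "trace 0 = 0"
  by (simp add: trace_def)

lemma trace_sum: "trace (sum f S) = (\<Sum>x\<in>S. trace (f x))"
  by (simp add: trace_def sum_component sum.swap[of _ UNIV S])

definition matrix_unit :: "'n \<Rightarrow> 'n \<Rightarrow> 'a::zero_neq_one^'n^'n" where
  "matrix_unit i j = (\<chi> a b. if a = i \<and> b = j then 1 else 0)"

lemma matrix_unit_mult:
  "matrix_unit i j ** matrix_unit k l = (if j = k then matrix_unit i l else (0::'a::semiring_1^'n^'n))"
proof -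
  have "(\<Sum>c\<in>UNIV. (if a = i \<and> c = j then 1 else 0) * (if c = k \<and> b = l then 1 else 0))
      = (\<Sum>c\<in>UNIV. if c = j then (if a = i \<and> j = k \<and> b = l then 1 else 0) else (0::'a))" for a b
    by (rule sum.cong) auto
  then show ?thesis
    by (auto simp: matrix_unit_def matrix_matrix_mult_def vec_eq_iff)
qed

lemma trace_matrix_unit_mult: "trace (matrix_unit j i ** (A::'a::semiring_1^'n^'n)) = A $ i $ j"
proof -
  have "(\<Sum>c\<in>UNIV. (if a = j \<and> c = i then 1 else 0) * A $ c $ a) = (if a = j then A $ i $ j else 0)" for a
    by (simp add: if_distrib if_distribR sum.delta' cong: if_cong)
  then show ?thesis
    by (simp add: matrix_unit_def trace_def matrix_matrix_mult_def)
qed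

lemma matrix_unit_expansion:
  "(A::'a::semiring_1^'n^'n) = (\<Sum>i\<in>UNIV. \<Sum>j\<in>UNIV. mat (A $ i $ j) ** matrix_unit i j)"
proof -
  have "A $ i $ j * (if a = i \<and> b = j then 1 else 0) = (if j = b then if i = a then A $ a $ b else 0 else 0)"
    for i j a b
    by simp
  then show ?thesis
    by (simp add: vec_eq_iff sum_component mat_mult_component matrix_unit_def)
qed

lemma matrix_eq_0_if_trace_mult_eq_0:
  assumes "\<And>Z. trace (Z ** A) = 0" shows "(A::'a::semiring_1^'n^'n) = 0"
  using assms trace_matrix_unit_mult by (metis vec_eq_iff zero_index)

lemma sandwich_eq_0_if_trace_eq_0:
  fixes A C Y :: "'a::comm_semiring_1^'n^'n"
  assumes "\<And>Z. trace (A ** Z ** C ** Y) = 0"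
  shows "C ** Y ** A = 0"
proof (rule matrix_eq_0_if_trace_mult_eq_0)
  fix Z
  have "trace (Z ** (C ** Y ** A)) = trace (A ** Z ** C ** Y)"
    by (metis trace_mul_sym matrix_mul_assoc)
  then show "trace (Z ** (C ** Y ** A)) = 0"
    using assms by simp
qed

context
  fixes D :: "complex^'n^'n \<Rightarrow> complex^'n^'n"
  assumes derivation: "is_derivation D"
begin

lemma derivation_add: "D (A + B) = D A + D B"
  using derivation by (simp add: is_derivation_def)

lemma derivation_mult: "D (A ** B) = D A ** B + A ** D B"
  using derivation by (simp add: is_derivation_def)

lemma derivation_mat_mult: "D (mat c ** A) = mat c ** D A"
  using derivation unfolding is_derivation_def cscale_eq_mat_mult by blast

lemma derivation_0: "D 0 = 0"
  using derivation_add[of 0 0] by simp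

lemma derivation_diff: "D (A - B) = D A - D B"
  using derivation_add[of "A - B" B] by (simp add: algebra_simps)

lemma derivation_sum: "finite S \<Longrightarrow> D (sum f S) = (\<Sum>x\<in>S. D (f x))"
  by (induction S rule: finite_induct) (simp_all add: derivation_0 derivation_add)

lemma trace_derivation_idempotent:
  assumes idem: "F ** F = F"
  shows "trace (D F) = 0"
proof -
  have Leibniz: "D F = D F ** F + F ** D F"
    using derivation_mult[of F F] idem by simp
  then have "F ** D F ** F = F ** (D F ** F + F ** D F) ** F"
    by (rule arg_cong)
  also have "\<dots> = F ** D F ** (F ** F) + (F ** F) ** D F ** F"
    by (simp add: matrix_add_ldistrib matrix_add_rdistrib matrix_mul_assoc)
  also have "\<dots> = F ** D F ** F + F ** D F ** F"
    by (simp only: idem)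
  finally have "F ** D F ** F = 0"
    by simp
  have "trace (F ** D F) = trace (F ** (F ** D F))"
    by (simp add: matrix_mul_assoc idem)
  also have "\<dots> = trace (F ** D F ** F)"
    by (rule trace_mul_sym)
  also have "\<dots> = 0"
    using \<open>F ** D F ** F = 0\<close> by simp
  finally have "trace (F ** D F) = 0" .
  moreover have "trace (D F) = trace (D F ** F) + trace (F ** D F)"
    by (metis Leibniz trace_add)
  ultimately show ?thesis
    by (simp add: trace_mul_sym[of "D F"])
qed

lemma trace_derivation_matrix_unit: "trace (D (matrix_unit i j)) = 0"
proof (cases "i = j")
  case True
  then show ?thesis
    by (simp add: trace_derivation_idempotent matrix_unit_mult)
next
  case False
  then have "trace (D (matrix_unit i i + matrix_unit i j)) = 0"
    by (intro trace_derivation_idempotent)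
      (simp add: matrix_add_ldistrib matrix_add_rdistrib matrix_unit_mult)
  then show ?thesis
    by (simp add: derivation_add trace_add trace_derivation_idempotent matrix_unit_mult)
qed

lemma trace_derivation: "trace (D A) = 0"
proof -
  have "D A = (\<Sum>i\<in>UNIV. \<Sum>j\<in>UNIV. mat (A $ i $ j) ** D (matrix_unit i j))"
    by (subst matrix_unit_expansion) (simp add: derivation_sum derivation_mat_mult)
  then show ?thesis
    by (simp add: trace_sum trace_mat_mult trace_derivation_matrix_unit)
qed

lemma trace_mult_derivation_self: "trace (A ** D A) = 0"
proof -
  have "trace (D (A ** A)) = trace (A ** D A) + trace (A ** D A)"
    by (simp add: derivation_mult trace_add trace_mul_sym[of "D A"])
  then show ?thesis
    by (simp add: trace_derivation)
qed

lemma derivation_sandwich_eq_0: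
  fixes A B C :: "complex^'n^'n"
  assumes "C ** A = 0" and "A ** B = 0"
  shows "C ** D A ** B = 0"
proof -
  have "C ** D A = D (C ** A) - D C ** A"
    by (simp add: derivation_mult)
  then have "C ** D A ** B = D (C ** A) ** B - D C ** (A ** B)"
    by (simp add: matrix_diff_rdistrib matrix_mul_assoc)
  then show ?thesis
    using assms by (simp add: derivation_0)
qed

end

lemma clinear_functional_trace_mult: "clinear_functional (\<lambda>A. trace (W ** A))"
  unfolding clinear_functional_def
proof (intro conjI allI)
  show "trace (W ** (A + B)) = trace (W ** A) + trace (W ** B)" for A B
    by (simp add: matrix_add_ldistrib trace_add)
  show "trace (W ** cscale c A) = c * trace (W ** A)" for c A
    by (simp add: cscale_eq_mat_mult matrix_mult_mat_left_commute trace_mat_mult)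
qed

lemma weak_2_local_derivation_trace_mult:
  assumes "weak_2_local_derivation \<Delta>" and "\<Delta> B = 0"
  obtains D where "is_derivation D" and "trace (W ** \<Delta> X) = trace (W ** D (X - B))"
proof -
  obtain D where D: "is_derivation D"
    and "trace (W ** \<Delta> X) = trace (W ** D X)" "trace (W ** \<Delta> B) = trace (W ** D B)"
    using assms(1) clinear_functional_trace_mult unfolding weak_2_local_derivation_def by blast
  then have "trace (W ** \<Delta> X) = trace (W ** D (X - B))"
    using assms(2) by (simp add: derivation_diff matrix_diff_ldistrib trace_sub)
  with D show ?thesis
    by (rule that)
qed

lemma weak_2_local_derivation_trace_mult_self:
  assumes "weak_2_local_derivation \<Delta>" and "\<Delta> B = 0"
  shows "trace ((X - B) ** \<Delta> X) = 0"
  using weak_2_local_derivation_trace_mult[OF assms, of "X - B" X]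
  by (metis trace_mult_derivation_self)

lemma weak_2_local_derivation_sandwich_eq_0:
  fixes A C :: "complex^'n^'n"
  assumes "weak_2_local_derivation \<Delta>" and "\<Delta> B = 0"
    and "\<And>D. is_derivation D \<Longrightarrow> C ** D (X - B) ** A = 0"
  shows "C ** \<Delta> X ** A = 0"
proof (rule sandwich_eq_0_if_trace_eq_0)
  fix Z
  obtain D where "is_derivation D" and "trace (A ** Z ** C ** \<Delta> X) = trace (A ** Z ** C ** D (X - B))"
    using weak_2_local_derivation_trace_mult[OF assms(1,2)] .
  moreover have "trace (A ** Z ** C ** D (X - B)) = trace (Z ** (C ** D (X - B) ** A))"
    by (metis matrix_mul_assoc trace_mul_sym)
  ultimately show "trace (A ** Z ** C ** \<Delta> X) = 0"
    using assms(3) by simp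
qed

lemma adj_adj [simp]: "adj (adj A) = A"
  by (simp add: adj_def vec_eq_iff)

lemma adj_mult: "adj (A ** B) = adj B ** adj A"
  by (simp add: adj_def matrix_matrix_mult_def vec_eq_iff mult.commute)

lemma adj_diff: "adj (A - B) = adj A - adj B"
  by (simp add: adj_def vec_eq_iff)

lemma adj_mult_self_eq_0_iff: "adj A ** A = 0 \<longleftrightarrow> A = 0"
proof
  assume "adj A ** A = 0"
  then have "(adj A ** A) $ j $ j = 0" for j
    by simp
  moreover have "complex_of_real (\<Sum>k\<in>UNIV. (cmod (A $ k $ j))\<^sup>2) = (adj A ** A) $ j $ j" for j
    by (simp only: of_real_sum complex_norm_square)
      (simp add: adj_def matrix_matrix_mult_def mult.commute)
  ultimately have "(\<Sum>k\<in>UNIV. (cmod (A $ k $ j))\<^sup>2) = 0" for j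
    by (metis of_real_eq_0_iff)
  then show "A = 0"
    by (simp add: vec_eq_iff sum_nonneg_eq_0_iff)
qed simp

lemma partial_isometry_mult_initial:
  assumes "adj E ** E ** (adj E ** E) = adj E ** E"
  shows "E ** (adj E ** E) = E"
proof -
  let ?Q = "adj E ** E"
  have "adj (E - E ** ?Q) ** (E - E ** ?Q) = ?Q - ?Q ** ?Q - ?Q ** ?Q + ?Q ** ?Q ** ?Q"
    by (simp add: adj_diff adj_mult matrix_diff_ldistrib matrix_diff_rdistrib matrix_mul_assoc)
  also have "\<dots> = 0"
    using assms by simp
  finally show ?thesis
    by (simp add: adj_mult_self_eq_0_iff)
qed

text \<open>\<open>P\<close>, \<open>Q\<close>, \<open>E\<close> play the roles of \<open>p\<^sub>k\<close>, \<open>p\<^sub>m\<close>, \<open>e\<^sub>k\<^sub>m\<close>; of the projections only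
  idempotence and mutual orthogonality are used.\<close>
context
  fixes \<Delta> :: "complex^'n^'n \<Rightarrow> complex^'n^'n" and P Q q r E :: "complex^'n^'n"
  assumes weak_2_local: "weak_2_local_derivation \<Delta>"
    and P_idem: "P ** P = P" and Q_idem: "Q ** Q = Q"
    and P_Q: "P ** Q = 0" and Q_P: "Q ** P = 0"
    and P_E: "P ** E = E" and E_Q: "E ** Q = E"
    and q_eq: "q = mat 1 - Q"
    and vanishing: "\<And>B. \<Delta> (q ** B ** q + r ** B ** Q) = 0"
begin

private lemma q_idem: "q ** q = q"
  and q_Q: "q ** Q = 0"
  and P_q: "P ** q = P"
  and q_P: "q ** P = P"
  and E_q: "E ** q = 0"
  and q_E: "q ** E = E"
  and E_E: "E ** E = 0"
  and complement_P_E: "(mat 1 - P) ** E = 0"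
proof -
  show "q ** q = q" "q ** Q = 0" "P ** q = P" "q ** P = P" "E ** q = 0"
    by (simp_all add: q_eq matrix_diff_ldistrib matrix_diff_rdistrib Q_idem P_Q Q_P E_Q)
  have "Q ** E = 0"
    by (metis P_E Q_P matrix_mul_assoc times0_left)
  then show "q ** E = E"
    by (simp add: q_eq matrix_diff_rdistrib)
  have "E ** E = E ** (Q ** P) ** E"
    by (metis E_Q P_E matrix_mul_assoc)
  then show "E ** E = 0"
    by (simp add: Q_P)
  show "(mat 1 - P) ** E = 0"
    by (simp add: matrix_diff_rdistrib P_E)
qed

private lemma corner_diff:
  "q ** (A - M) ** q + r ** (A - M) ** Q = (q ** A ** q + r ** A ** Q) - (q ** M ** q + r ** M ** Q)"
  by (simp add: matrix_diff_ldistrib matrix_diff_rdistrib)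

private lemma complement_P_Delta_q:
  "(mat 1 - P) ** \<Delta> (q ** A ** q + r ** A ** Q + mat c ** E) ** q = 0"
proof (rule weak_2_local_derivation_sandwich_eq_0[OF weak_2_local vanishing[of A]])
  fix D :: "complex^'n^'n \<Rightarrow> complex^'n^'n"
  assume "is_derivation D"
  moreover have "(mat 1 - P) ** (mat c ** E) = 0" and "mat c ** E ** q = 0"
    by (simp_all add: matrix_mult_mat_left_commute complement_P_E E_q flip: matrix_mul_assoc)
  ultimately show "(mat 1 - P) ** D (q ** A ** q + r ** A ** Q + mat c ** E
      - (q ** A ** q + r ** A ** Q)) ** q = 0"
    by (simp add: derivation_sandwich_eq_0)
qed

private lemma complement_P_Delta_Q_minus_E:
  "(mat 1 - P) ** \<Delta> (q ** A ** q + r ** A ** Q + mat c ** E) ** (Q - E) = 0"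
proof (rule weak_2_local_derivation_sandwich_eq_0[OF weak_2_local vanishing[of "A - mat c ** P"]])
  fix D :: "complex^'n^'n \<Rightarrow> complex^'n^'n"
  assume "is_derivation D"
  have "q ** (mat c ** P) ** q + r ** (mat c ** P) ** Q = mat c ** P"
    by (simp add: matrix_mult_mat_left_commute P_q q_P P_Q flip: matrix_mul_assoc)
  then have "q ** A ** q + r ** A ** Q + mat c ** E
      - (q ** (A - mat c ** P) ** q + r ** (A - mat c ** P) ** Q) = mat c ** (E + P)"
    by (simp add: corner_diff matrix_add_ldistrib)
  moreover have "(mat 1 - P) ** (mat c ** (E + P)) = 0"
    by (simp add: matrix_mult_mat_left_commute matrix_add_ldistrib complement_P_E
        matrix_diff_rdistrib P_idem P_E)
  moreover have "(E + P) ** (Q - E) = 0"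
    by (simp add: matrix_add_rdistrib matrix_diff_ldistrib E_Q E_E P_Q P_E)
  then have "mat c ** (E + P) ** (Q - E) = 0"
    by (simp flip: matrix_mul_assoc)
  ultimately show "(mat 1 - P) ** D (q ** A ** q + r ** A ** Q + mat c ** E
      - (q ** (A - mat c ** P) ** q + r ** (A - mat c ** P) ** Q)) ** (Q - E) = 0"
    using \<open>is_derivation D\<close> by (simp add: derivation_sandwich_eq_0)
qed

private lemma q_Delta_q: "q ** \<Delta> (q ** A ** q + r ** A ** Q + mat c ** E) ** q = 0"
proof (rule sandwich_eq_0_if_trace_eq_0)
  fix Z
  let ?X = "q ** A ** q + r ** A ** Q + mat c ** E"
  have "q ** (q ** Z ** q) ** q = (q ** q) ** Z ** (q ** q)"
    by (simp add: matrix_mul_assoc)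
  moreover have "r ** (q ** Z ** q) ** Q = r ** (q ** Z) ** (q ** Q)"
    by (simp add: matrix_mul_assoc)
  ultimately have "q ** (q ** Z ** q) ** q + r ** (q ** Z ** q) ** Q = q ** Z ** q"
    by (simp add: q_idem q_Q)
  then have shift: "?X - (q ** (A - q ** Z ** q) ** q + r ** (A - q ** Z ** q) ** Q)
      = mat c ** E + q ** Z ** q"
    by (simp add: corner_diff)
  have "trace ((mat c ** E + q ** Z ** q) ** \<Delta> ?X) = 0"
    using weak_2_local_derivation_trace_mult_self[OF weak_2_local
        vanishing[of "A - q ** Z ** q"], of ?X, unfolded shift] .
  moreover have "trace (mat c ** E ** \<Delta> ?X) = 0"
    using weak_2_local_derivation_trace_mult_self[OF weak_2_local vanishing[of A], of ?X]
    by simp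
  ultimately show "trace (q ** Z ** q ** \<Delta> ?X) = 0"
    by (simp add: matrix_add_rdistrib trace_add)
qed

lemma weak_2_local_derivation_eq_corner:
  "\<Delta> (q ** A ** q + r ** A ** Q + mat c ** E) = P ** \<Delta> (q ** A ** q + r ** A ** Q + mat c ** E) ** Q"
proof -
  define Y where "Y = \<Delta> (q ** A ** q + r ** A ** Q + mat c ** E)"
  have NYq: "(mat 1 - P) ** Y ** q = 0" and NYQE: "(mat 1 - P) ** Y ** (Q - E) = 0"
    and qYq: "q ** Y ** q = 0"
    unfolding Y_def by (fact complement_P_Delta_q complement_P_Delta_Q_minus_E q_Delta_q)+
  have q_plus_Q: "q + Q = mat 1"
    by (simp add: q_eq)
  have "(mat 1 - P) ** Y ** E = (mat 1 - P) ** Y ** q ** E"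
    by (simp add: q_E flip: matrix_mul_assoc)
  then have "(mat 1 - P) ** Y ** Q = 0"
    using NYq NYQE by (simp add: matrix_diff_ldistrib)
  then have "(mat 1 - P) ** Y ** (q + Q) = 0"
    using NYq by (simp add: matrix_add_ldistrib)
  then have Y_eq: "Y = P ** Y"
    by (simp add: q_plus_Q matrix_diff_rdistrib)
  have "P ** Y ** q = P ** (q ** Y ** q)"
    by (simp add: matrix_mul_assoc P_q)
  then have "P ** Y ** (q + Q) = P ** Y ** Q"
    using qYq by (simp add: matrix_add_ldistrib)
  then show ?thesis
    using Y_eq by (simp add: q_plus_Q flip: Y_def)
qed

end

theorem lemma2p4:
  fixes \<Delta> :: "complex^'n^'n \<Rightarrow> complex^'n^'n"
    and p :: "'n \<Rightarrow> complex^'n^'n"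
    and m :: 'n
    and R :: "'n set"
    and q r :: "complex^'n^'n"
  assumes "weak_2_local_derivation \<Delta>"
    and "\<And>i. minimal_projection (p i)"
    and "\<And>i j. i \<noteq> j \<Longrightarrow> p i ** p j = 0"
    and "R \<subseteq> UNIV - {m}"
    and "q = mat 1 - p m"
    and "r = (\<Sum>i\<in>R. p i)"
    and "\<And>a. \<Delta> (q ** a ** q + r ** a ** p m) = 0"
  shows "\<forall>a c k e. k \<noteq> m \<and> adj e ** e = p m \<and> e ** adj e = p k \<longrightarrow>
     \<Delta> (q ** a ** q + r ** a ** p m + cscale c e)
       = p k ** \<Delta> (q ** a ** q + r ** a ** p m + cscale c e) ** p m"
proof (intro allI impI, elim conjE)
  fix a c k e
  assume "k \<noteq> m" and initial: "adj e ** e = p m" and final: "e ** adj e = p k"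
  have idem: "p i ** p i = p i" for i
    using assms(2) by (simp add: minimal_projection_def is_projection_def)
  have orth: "p k ** p m = 0" "p m ** p k = 0"
    using assms(3) \<open>k \<noteq> m\<close> by auto
  have e_pm: "e ** p m = e"
    using partial_isometry_mult_initial[of e] initial idem by simp
  have "p k ** e = e ** (adj e ** e)"
    by (simp add: final matrix_mul_assoc)
  then have pk_e: "p k ** e = e"
    by (simp add: initial e_pm)
  \<comment> \<open>Neither \<open>R\<close> nor the shape of \<open>r\<close> matters: the argument works for an arbitrary \<open>r\<close>.\<close>
  show "\<Delta> (q ** a ** q + r ** a ** p m + cscale c e)
      = p k ** \<Delta> (q ** a ** q + r ** a ** p m + cscale c e) ** p m"
    using weak_2_local_derivation_eq_corner[OF assms(1) idem idem orth pk_e e_pm assms(5,7)]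
    by (simp add: cscale_eq_mat_mult)
qed

end
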